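(* For every $n\ge1$, every $\varepsilon>0$ and every $\lambda>0$, $$P\big(|X_n-\mu_n|\ge\varepsilon\mu_n\big)\le 2\exp\Big[3\varepsilon\lambda+\max\big(12\lambda^2,\,2e^{\lambda}\big)\Big]\,n^{-2\varepsilon\lambda}.$$
   Context: Let $X_n$ be the number of comparisons used by randomized Quicksort (uniform random pivot) on $n$ distinct numbers. Equivalently, $X_0=0$ and $$X_n\stackrel{d}{=}X_{U_n-1}+X^*_{n-U_n}+n-1,$$ with $U_n$ uniform on $\{1,\dots,n\}$, $X_j^*\stackrel{d}{=}X_j$, all independent. $\mu_n:=\mathbf EX_n=2(n+1)H_n-4n$, where $H_n=\sum_{k=1}^n1/k$. *)

theory Defs
  imports "HOL-Probability.Probability"
begin

text \<open>Distributions of the number of comparisons of randomized Quicksort.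
  qs_upto n is the list of the laws of X_0, ..., X_n, built by the distributional
  recursion X_n = X_{U_n - 1} + X'_{n - U_n} + n - 1 with U_n uniform on {1..n}
  and all variables independent.\<close>

primrec qs_upto :: "nat \<Rightarrow> nat pmf list" where
  "qs_upto 0 = [return_pmf 0]"
| "qs_upto (Suc m) =
     (let L = qs_upto m in
      L @ [pmf_of_set {1..Suc m} \<bind>
             (\<lambda>u. (L ! (u - 1)) \<bind>
               (\<lambda>a. (L ! (Suc m - u)) \<bind>
                 (\<lambda>b. return_pmf (a + b + m))))])"

definition qs_pmf :: "nat \<Rightarrow> nat pmf" where
  "qs_pmf n = qs_upto n ! n"

definition qs_mean :: "nat \<Rightarrow> real" where
  "qs_mean n = 2 * (real n + 1) * harm n - 4 * real n"

end

theory Submission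
  imports Defs
begin

text \<open>
  Write G n t for the centred moment generating function E exp (t (X_n - mu_n)). Conditioning
  on the pivot gives
    G n t = (1/n) * sum_{a<n} G a t * G (n-1-a) t * exp (t * c_n(a)),
  where the centred toll c_n(a) = n - 1 + mu_a + mu_{n-1-a} - mu_n satisfies, with
  P = a+1, Q = n-a and M = n+1,
    -2PQ/M <= c_n(a) <= (P-Q)^2/M   and   sum_a c_n(a) = 0
  by harmonic-number estimates. From these facts alone, induction on n gives
  G n t <= exp (Phi (t n)) for t > 0 and G n (-t) <= exp (12 (t n)^2), where
  Phi x = 12 x^2 for x <= 21/4 and Phi x = 2 (e^x - 1 - x) beyond. The induction step needs
    sum_{a<n} exp (Phi (t a) + Phi (t (n-1-a)) + t c_n(a) - Phi (t n)) <= n.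
  When t n is small, each term is at most 1 plus a fixed multiple of c_n(a) (a chord of exp,
  whose error the quadratic part of Phi absorbs), and these linear terms cancel. Otherwise the
  terms decay geometrically away from the middle of the range, up to a uniformly small
  remainder. Chernoff's bound at t = lambda/n together with mu_n >= n (2 ln n - 3) then gives
  the claim.
\<close>

section \<open>Elementary inequalities for the exponential\<close>

lemma exp_minus_le_quadratic:
  fixes x :: real assumes "0 \<le> x"
  shows "exp (-x) \<le> 1 - x + x\<^sup>2 / 2"
proof -
  let ?f = "\<lambda>y::real. exp y * (1 - y + y\<^sup>2 / 2)"
  have "?f 0 \<le> ?f x"
  proof (rule DERIV_nonneg_imp_nondecreasing[OF assms])
    fix y :: real
    show "\<exists>d. DERIV ?f y :> d \<and> d \<ge> 0"
    proof (intro exI conjI)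
      show "DERIV ?f y :> exp y * y\<^sup>2 / 2"
        by (rule derivative_eq_intros refl | simp)+ (simp add: algebra_simps power2_eq_square)
    qed simp
  qed
  hence "exp (-x) * 1 \<le> exp (-x) * ?f x"
    by (intro mult_left_mono) auto
  thus ?thesis by (simp add: exp_minus field_simps)
qed

lemma mult_exp_half_le_exp_minus_one:
  fixes y :: real assumes "0 \<le> y"
  shows "y * exp (y/2) \<le> exp y - 1"
proof -
  define u where "u = y/2"
  have u: "0 \<le> u" using assms by (simp add: u_def)
  have "2*u \<le> exp u - exp (-u)"
    using exp_lower_Taylor_quadratic[OF u] exp_minus_le_quadratic[OF u] by linarith
  hence "exp u * (2*u) \<le> exp u * (exp u - exp (-u))" by (intro mult_left_mono) auto
  also have "\<dots> = exp y - 1" by (simp add: u_def algebra_simps flip: exp_add exp_diff)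
  finally show ?thesis by (simp add: u_def algebra_simps)
qed

lemma exp_le_chord_nonneg:
  fixes x v :: real assumes "0 \<le> x" "x \<le> v" "0 < v"
  shows "exp x \<le> 1 + x * (exp v - 1) / v"
proof -
  define l where "l = x / v"
  have l: "0 \<le> l" "l \<le> 1" using assms by (auto simp: l_def field_simps)
  have "exp ((1 - l) *\<^sub>R 0 + l *\<^sub>R v) \<le> (1 - l) * exp 0 + l * exp v"
    using l by (intro convex_onD[OF exp_convex]) auto
  also have "\<dots> = 1 + x * (exp v - 1) / v" using assms by (simp add: l_def field_simps)
  finally show ?thesis using assms by (simp add: l_def)
qed

lemma exp_le_chord_nonpos:
  fixes x v :: real assumes "-v \<le> x" "x \<le> 0" "0 < v"
  shows "exp x \<le> 1 + x * (1 - exp (-v)) / v"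
proof -
  define l where "l = -x / v"
  have l: "0 \<le> l" "l \<le> 1" using assms by (auto simp: l_def field_simps)
  have "exp ((1 - l) *\<^sub>R 0 + l *\<^sub>R (-v)) \<le> (1 - l) * exp 0 + l * exp (-v)"
    using l by (intro convex_onD[OF exp_convex]) auto
  also have "\<dots> = 1 + x * (1 - exp (-v)) / v" using assms by (simp add: l_def field_simps)
  finally show ?thesis using assms by (simp add: l_def)
qed

lemma exp_diff_square_le:
  fixes y :: real assumes "0 \<le> y"
  shows "exp (y - y\<^sup>2) \<le> 1 + y"
proof (cases "y \<le> 1")
  case True
  have "exp (y - y\<^sup>2) \<le> exp (ln (1 + y))"
    using ln_one_plus_pos_lower_bound[OF assms True] by simp
  thus ?thesis using assms by simp
next
  case False
  hence "y - y\<^sup>2 \<le> 0" by (simp add: power2_eq_square mult_le_cancel_left1)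
  hence "exp (y - y\<^sup>2) \<le> 1" by (simp only: exp_le_one_iff)
  thus ?thesis using assms by linarith
qed

lemma exp_one_bounds: "2718/1000 \<le> exp (1::real)" "exp (1::real) \<le> 27183/10000"
  using e_approx_32 by (simp_all add: abs_if split: if_split_asm)

lemma exp_minus_one_le: "exp (-1::real) \<le> 2/5"
  using exp_one_bounds(1) by (simp add: exp_minus field_simps)

lemma exp_quarters_le: "exp (real k / 4) \<le> (128404/100000::real) ^ k"
proof -
  have "exp (1/4::real) ^ 4 \<le> (128404/100000) ^ 4"
    using exp_one_bounds(2) by (simp add: power_divide flip: exp_of_nat_mult)
  hence "exp (1/4::real) \<le> 128404/100000" by simp
  hence "exp (1/4) ^ k \<le> (128404/100000::real) ^ k" by (intro power_mono) auto
  thus ?thesis by (simp flip: exp_of_nat_mult)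
qed

lemma exp_ge_above_21_4:
  fixes s :: real assumes "s \<ge> 21/4"
  shows "exp s \<ge> 185 * (1 + (s - 21/4) + (s - 21/4)\<^sup>2 / 2)"
proof -
  have "(2718/1000::real) ^ 5 * (41/32) \<le> exp 1 ^ 5 * exp (1/4)"
  proof (intro mult_mono power_mono exp_one_bounds)
    show "41/32 \<le> exp (1/4::real)"
      using exp_lower_Taylor_quadratic[of "1/4::real"] by (simp add: power2_eq_square)
  qed auto
  hence e: "185 \<le> exp (21/4::real)" by (simp add: power_divide flip: exp_of_nat_mult exp_add)
  have "1 + (s - 21/4) + (s - 21/4)\<^sup>2 / 2 \<le> exp (s - 21/4)"
    using exp_lower_Taylor_quadratic[of "s - 21/4"] assms by simp
  moreover have "1 + (s - 21/4) + (s - 21/4)\<^sup>2 / 2 \<ge> 0" using assms by simp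
  ultimately have "185 * (1 + (s - 21/4) + (s - 21/4)\<^sup>2 / 2) \<le> exp (21/4) * exp (s - 21/4)"
    using e by (intro mult_mono) auto
  thus ?thesis by (simp flip: exp_add)
qed

lemma exp_ge_185: "s \<ge> 21/4 \<Longrightarrow> exp s \<ge> (185::real)"
  using exp_ge_above_21_4[of s] by (smt (verit) zero_le_power2 divide_nonneg_nonneg)

lemma exp_half_ge_12:
  fixes s :: real assumes s: "s \<ge> 21/4"
  shows "exp (s/2) \<ge> 12"
proof -
  have "(2718/1000::real) * (2718/1000) \<le> exp 1 * exp 1"
    using exp_one_bounds(1) by (intro mult_mono) auto
  hence e2: "7 \<le> exp (2::real)" by (simp flip: exp_add)
  have "(s/2 - 2)\<^sup>2 \<ge> (5/8)\<^sup>2" using s by (intro power_mono) auto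
  hence "233/128 \<le> exp (s/2 - 2)"
    using exp_lower_Taylor_quadratic[of "s/2 - 2"] s by (simp add: power2_eq_square)
  hence "7 * (233/128) \<le> exp 2 * exp (s/2 - 2)"
    using e2 by (intro mult_mono) auto
  thus ?thesis by (simp flip: exp_add)
qed

section \<open>The exponent of the moment generating function\<close>

definition mgf_exponent :: "real \<Rightarrow> real" where
  "mgf_exponent x = (if x \<le> 21/4 then 12 * x\<^sup>2 else 2 * (exp x - 1 - x))"

lemma mgf_exponent_small: "x \<le> 21/4 \<Longrightarrow> mgf_exponent x = 12 * x\<^sup>2"
  by (simp add: mgf_exponent_def)

lemma mgf_exponent_large: "x > 21/4 \<Longrightarrow> mgf_exponent x = 2 * (exp x - 1 - x)"
  by (simp add: mgf_exponent_def)

lemma mgf_exponent_nonneg: "mgf_exponent x \<ge> 0"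
proof -
  have "exp x - 1 - x \<ge> 0" using exp_ge_add_one_self[of x] by linarith
  thus ?thesis by (simp add: mgf_exponent_def)
qed

lemma mgf_exponent_le: "mgf_exponent x \<le> 2 * (exp x - 1 - x) + 12 * x\<^sup>2"
proof -
  have "exp x - 1 - x \<ge> 0" using exp_ge_add_one_self[of x] by linarith
  thus ?thesis by (simp add: mgf_exponent_def)
qed

lemma mgf_exponent_le_max: "mgf_exponent x \<le> max (12 * x\<^sup>2) (2 * exp x)"
proof (cases "x \<le> 21/4")
  case False
  hence "mgf_exponent x \<le> 2 * exp x" by (simp add: mgf_exponent_large)
  thus ?thesis by simp
qed (simp add: mgf_exponent_small)

text \<open>Each of the next three lemmas becomes a quadratic inequality in r = s - 21/4 once exp s
  is replaced by the lower bound of exp_ge_above_21_4.\<close>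

lemma quadratic_le_mgf_exponent_large:
  fixes s :: real assumes s: "s \<ge> 21/4"
  shows "12 * s\<^sup>2 + s + 1 \<le> 2 * (exp s - 1 - s)"
proof -
  define r where "r = s - 21/4"
  have r: "r \<ge> 0" using s by (simp add: r_def)
  have "2 * (185 * (1 + r + r\<^sup>2 / 2) - 1 - s) - (12 * s\<^sup>2 + s + 1) = 173 * r\<^sup>2 + 241 * r + 41/2"
    by (simp add: r_def power2_eq_square field_simps)
  moreover have "173 * r\<^sup>2 + 241 * r + 41/2 \<ge> 0" using r by simp
  ultimately show ?thesis using exp_ge_above_21_4[OF s] by (simp add: r_def)
qed

lemma exp_half_quadratic_le_exp:
  fixes s :: real assumes s: "s \<ge> 21/4"
  shows "2 * exp (s/2) + 3 * s\<^sup>2 + 3/2 * s + 1 \<le> 6/5 * exp s"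
proof -
  define r where "r = s - 21/4"
  have r: "r \<ge> 0" using s by (simp add: r_def)
  have "12 * exp (s/2) \<le> exp (s/2) * exp (s/2)"
    using exp_half_ge_12[OF s] by (intro mult_right_mono) auto
  hence half: "2 * exp (s/2) \<le> exp s / 6" by (simp flip: exp_add)
  have "185 * (1 + r + r\<^sup>2 / 2) - (3 * s\<^sup>2 + 3/2 * s + 1) = 179/2 * r\<^sup>2 + 152 * r + 1495/16"
    by (simp add: r_def power2_eq_square field_simps)
  moreover have "179/2 * r\<^sup>2 + 152 * r + 1495/16 \<ge> 0" using r by simp
  ultimately have "3 * s\<^sup>2 + 3/2 * s + 1 \<le> exp s" using exp_ge_above_21_4[OF s] by (simp add: r_def)
  thus ?thesis using half exp_ge_zero[of s] by linarith
qed

lemma four_exp_le_mult_exp_minus_14: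
  fixes s :: real assumes s: "s \<ge> 21/4"
  shows "4 * exp s \<le> s * (exp s - 14)"
proof -
  define r where "r = s - 21/4"
  have r: "r \<ge> 0" using s by (simp add: r_def)
  have "185 * (1 + r) \<le> 185 * (1 + r + r\<^sup>2 / 2)" by simp
  also have "\<dots> \<le> exp s" using exp_ge_above_21_4[OF s] by (simp add: r_def)
  finally have "185 * (1 + r) \<le> exp s" .
  hence "185 * (1 + r) * (5/4 + r) \<le> exp s * (5/4 + r)" using r by (intro mult_right_mono) auto
  moreover have "185 * (1 + r) * (5/4 + r) - 14 * s = 185 * r\<^sup>2 + 1609/4 * r + 631/4"
    by (simp add: r_def power2_eq_square field_simps)
  moreover have "185 * r\<^sup>2 + 1609/4 * r + 631/4 \<ge> 0" using r by simp
  moreover have "s * (exp s - 14) - 4 * exp s = exp s * (5/4 + r) - 14 * s" by (simp add: r_def algebra_simps)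
  ultimately show ?thesis by linarith
qed

lemma moderate_range_bound_piece:
  fixes s a b U :: real
  assumes a8: "1/8 \<le> a" and as: "a \<le> s" and sb: "s \<le> b" and eb: "exp b \<le> U"
    and num: "2 * U / (a * (2 + 18 * a)) + 1 / (1 + 4 * a\<^sup>2 - a/2) \<le> 1"
  shows "2 * exp s / (s * (2 + 18 * s)) + exp (s/2 - 4 * s\<^sup>2) \<le> 1"
proof -
  have a0: "a > 0" using a8 by simp
  have es: "exp s \<le> U" using sb eb by (meson exp_le_cancel_iff order.trans)
  have "0 \<le> U" using es exp_gt_zero[of s] by linarith
  hence "2 * exp s / (s * (2 + 18 * s)) \<le> 2 * U / (a * (2 + 18 * a))"
    using es as a0 by (intro frac_le mult_mono) auto
  moreover have m0: "4 * a\<^sup>2 - a/2 \<ge> 0"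
    using mult_nonneg_nonneg[of a "4 * a - 1/2"] a8 by (simp add: power2_eq_square algebra_simps)
  moreover have m: "4 * s\<^sup>2 - s/2 \<ge> 4 * a\<^sup>2 - a/2"
  proof -
    have "(s - a) * (4 * (s + a) - 1/2) \<ge> 0" using as a8 by (intro mult_nonneg_nonneg) auto
    thus ?thesis by (simp add: power2_eq_square field_simps)
  qed
  moreover have "exp (s/2 - 4 * s\<^sup>2) \<le> 1 / (1 + 4 * a\<^sup>2 - a/2)"
  proof -
    have "exp (s/2 - 4 * s\<^sup>2) = 1 / exp (4 * s\<^sup>2 - s/2)"
      by (simp add: exp_diff exp_minus field_simps flip: exp_add)
    also have "\<dots> \<le> 1 / (1 + (4 * s\<^sup>2 - s/2))"
      using m m0 by (intro divide_left_mono) auto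
    also have "\<dots> \<le> 1 / (1 + 4 * a\<^sup>2 - a/2)"
      using m m0 by (intro divide_left_mono) auto
    finally show ?thesis .
  qed
  ultimately show ?thesis using num by linarith
qed

lemma moderate_range_bound:
  fixes s :: real assumes "2/3 \<le> s" "s \<le> 21/4"
  shows "2 * exp s / (s * (2 + 18 * s)) + exp (s/2 - 4 * s\<^sup>2) \<le> 1"
proof -
  have E: "exp (real k / 4) \<le> (128404/100000::real) ^ k" for k by (rule exp_quarters_le)
  consider "s \<le> 3/4" | "3/4 \<le> s" "s \<le> 5/4" | "5/4 \<le> s" "s \<le> 5/2" | "5/2 \<le> s" "s \<le> 4"
    | "4 \<le> s" "s \<le> 19/4" | "19/4 \<le> s" by linarith
  thus ?thesis
  proof cases
    case 1 show ?thesis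
      by (rule moderate_range_bound_piece[of "2/3" s "real 3 / 4" "(128404/100000) ^ 3"])
        (use assms 1 E[of 3] in \<open>auto simp: power_divide power2_eq_square\<close>)
  next
    case 2 show ?thesis
      by (rule moderate_range_bound_piece[of "3/4" s "real 5 / 4" "(128404/100000) ^ 5"])
        (use assms 2 E[of 5] in \<open>auto simp: power_divide power2_eq_square\<close>)
  next
    case 3 show ?thesis
      by (rule moderate_range_bound_piece[of "5/4" s "real 10 / 4" "(128404/100000) ^ 10"])
        (use assms 3 E[of 10] in \<open>auto simp: power_divide power2_eq_square\<close>)
  next
    case 4 show ?thesis
      by (rule moderate_range_bound_piece[of "5/2" s "real 16 / 4" "(128404/100000) ^ 16"])
        (use assms 4 E[of 16] in \<open>auto simp: power_divide power2_eq_square\<close>)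
  next
    case 5 show ?thesis
      by (rule moderate_range_bound_piece[of "4" s "real 19 / 4" "(128404/100000) ^ 19"])
        (use assms 5 E[of 19] in \<open>auto simp: power_divide power2_eq_square\<close>)
  next
    case 6 show ?thesis
      by (rule moderate_range_bound_piece[of "19/4" s "real 21 / 4" "(128404/100000) ^ 21"])
        (use assms 6 E[of 21] in \<open>auto simp: power_divide power2_eq_square\<close>)
  qed
qed

lemma moderate_range_bound_scaled:
  fixes t N :: real
  assumes t: "0 < t" and N: "20 \<le> N" and lower: "3/4 \<le> t * (N + 1)" and upper: "t * N \<le> 21/4"
  shows "2 * exp (t * N) / (t * (2 + 18 * (t * (N + 1))))
    + N * exp (t * (N + 1) / 2 - 4 * (t * (N + 1))\<^sup>2) \<le> N"
proof -
  define s where "s = t * N"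
  define s' where "s' = t * (N + 1)"
  have ss': "s' = s + t" by (simp add: s_def s'_def algebra_simps)
  have s: "2/3 \<le> s" "s \<le> 21/4"
  proof -
    have "3/4 * N \<le> s' * N" using lower N by (intro mult_right_mono) (auto simp: s'_def)
    hence "2/3 * (N + 1) \<le> s * (N + 1)" using N by (simp add: s_def s'_def algebra_simps)
    moreover have "N + 1 > 0" using N by simp
    ultimately show "2/3 \<le> s" by (meson mult_le_cancel_right_pos)
    show "s \<le> 21/4" using upper by (simp add: s_def)
  qed
  have "2 * exp s / (t * (2 + 18 * s')) \<le> 2 * exp s / (t * (2 + 18 * s))"
    using t s ss' by (intro divide_left_mono mult_left_mono) auto
  also have "t * (2 + 18 * s) = s * (2 + 18 * s) / N" using N by (simp add: s_def)
  also have "2 * exp s / (s * (2 + 18 * s) / N) = N * (2 * exp s / (s * (2 + 18 * s)))"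
    by (simp add: divide_divide_eq_right mult.commute)
  finally have geometric: "2 * exp s / (t * (2 + 18 * s')) \<le> N * (2 * exp s / (s * (2 + 18 * s)))" .
  have "(s' - s) * (1/2 - 4 * (s' + s)) \<le> 0" using ss' t s by (intro mult_nonneg_nonpos) auto
  hence "exp (s' / 2 - 4 * s'\<^sup>2) \<le> exp (s / 2 - 4 * s\<^sup>2)"
    by (simp add: power2_eq_square field_simps)
  hence "N * exp (s' / 2 - 4 * s'\<^sup>2) \<le> N * exp (s / 2 - 4 * s\<^sup>2)"
    using N by (intro mult_left_mono) auto
  moreover have "N * (2 * exp s / (s * (2 + 18 * s))) + N * exp (s / 2 - 4 * s\<^sup>2) \<le> N * 1"
    using moderate_range_bound[OF s] N by (subst distrib_left[symmetric]) (intro mult_left_mono, auto)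
  ultimately have "2 * exp s / (t * (2 + 18 * s')) + N * exp (s' / 2 - 4 * s'\<^sup>2) \<le> N"
    using geometric by linarith
  thus ?thesis by (simp only: s_def s'_def)
qed

section \<open>Pointwise bounds for one split\<close>

text \<open>In this section P = a + 1 and Q = n - a are the sizes, plus one, of the two parts of a
  split of n elements, M = P + Q = n + 1, and c stands for the centred toll of the split.\<close>

lemma split_sizes_basic:
  fixes P Q M :: real
  assumes P: "1 \<le> P" and Q: "1 \<le> Q" and M: "M = P + Q"
  shows "P * Q \<ge> 1" "4 * P * Q \<le> M\<^sup>2" "(P - Q)\<^sup>2 \<le> M\<^sup>2" "M > 0"
    "(P - Q)\<^sup>2 = M\<^sup>2 - 4 * P * Q" "P * Q \<ge> M - 1"
proof -
  show e: "(P - Q)\<^sup>2 = M\<^sup>2 - 4 * P * Q" using M by (simp add: power2_eq_square algebra_simps)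
  have "1 * 1 \<le> P * Q" using P Q by (intro mult_mono) auto
  thus PQ: "P * Q \<ge> 1" by simp
  show "4 * P * Q \<le> M\<^sup>2" using e zero_le_power2[of "P - Q"] by linarith
  show "(P - Q)\<^sup>2 \<le> M\<^sup>2" using e PQ by linarith
  show "M > 0" using P Q M by simp
  have "(P - 1) * (Q - 1) \<ge> 0" using P Q by simp
  thus "P * Q \<ge> M - 1" using M by (simp add: algebra_simps)
qed

lemma toll_le_total:
  fixes P Q M c :: real
  assumes P: "1 \<le> P" and Q: "1 \<le> Q" and M: "M = P + Q" and cu: "c \<le> (P - Q)\<^sup>2 / M"
  shows "c \<le> M"
proof -
  note B = split_sizes_basic[OF P Q M]
  have "(P - Q)\<^sup>2 / M \<le> M\<^sup>2 / M" using B by (intro divide_right_mono) auto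
  thus ?thesis using cu B by (simp add: power2_eq_square)
qed

lemma toll_le_size_diff:
  fixes P Q M c :: real
  assumes P: "1 \<le> P" and Q: "1 \<le> Q" and M: "M = P + Q" and PQ: "P \<le> Q"
    and cu: "c \<le> (P - Q)\<^sup>2 / M"
  shows "c \<le> Q - P"
proof -
  have M0: "M > 0" using split_sizes_basic[OF P Q M] by simp
  have "(P - Q)\<^sup>2 = (Q - P) * (Q - P)" by (simp add: power2_eq_square algebra_simps)
  also have "\<dots> \<le> (Q - P) * M" using PQ P Q M by (intro mult_left_mono) auto
  finally have "(P - Q)\<^sup>2 / M \<le> (Q - P) * M / M" using M0 by (intro divide_right_mono) auto
  thus ?thesis using cu M0 by simp
qed

lemma square_split_bound:
  fixes P Q M t :: real
  assumes P: "1 \<le> P" and Q: "1 \<le> Q" and M: "M = P + Q"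
  shows "(2 * t * P * Q / M)\<^sup>2 \<le> t\<^sup>2 * (P * Q)"
proof -
  note B = split_sizes_basic[OF P Q M]
  have "(2 * t * P * Q / M)\<^sup>2 = (t\<^sup>2 * (P * Q)) * (4 * P * Q / M\<^sup>2)"
    by (simp add: power2_eq_square power_divide)
  also have "\<dots> \<le> (t\<^sup>2 * (P * Q)) * 1"
    using B by (intro mult_left_mono) auto
  finally show ?thesis by simp
qed

lemma exp_le_chord_with_slack:
  fixes s z K g :: real
  assumes s: "0 < s" and z: "0 < z" and linear: "s * z \<le> 2 * K" and quadratic: "z\<^sup>2 \<le> K"
    and g: "2 * K \<le> g"
  shows "exp (z - g) \<le> 1 + (1 - exp (- s)) / s * z"
proof -
  define b where "b = (1 - exp (- s)) / s"
  have b0: "0 \<le> b" and b1: "b \<le> 1" using s exp_ge_add_one_self[of "-s"] by (auto simp: b_def)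
  have "s - s\<^sup>2/2 \<le> 1 - exp (-s)" using exp_minus_le_quadratic[of s] s by simp
  hence "(s - s\<^sup>2/2) / s \<le> b" using s unfolding b_def by (intro divide_right_mono) auto
  hence "1 - b \<le> s / 2" using s by (simp add: power2_eq_square diff_divide_distrib)
  hence "(1 - b) * z \<le> s / 2 * z" using z by (intro mult_right_mono) auto
  hence "z - b * z \<le> K" using linear by (simp add: algebra_simps)
  moreover have "(b * z)\<^sup>2 \<le> z\<^sup>2" using b0 b1 z by (intro power_mono) (auto simp: mult_left_le_one_le)
  ultimately have "z - g \<le> b * z - (b * z)\<^sup>2" using quadratic g by linarith
  hence "exp (z - g) \<le> exp (b * z - (b * z)\<^sup>2)" by simp
  also have "\<dots> \<le> 1 + b * z" using b0 z by (intro exp_diff_square_le) auto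
  finally show ?thesis by (simp add: b_def)
qed

lemma exp_minus_le_chord_with_slack:
  fixes s w K g :: real
  assumes s: "0 < s" "s \<le> 3/4" and w: "0 < w" "w \<le> s / 2" and linear: "s * w \<le> 2 * K"
    and quadratic: "w\<^sup>2 \<le> K" and g: "12 * K \<le> g"
  shows "exp (- w - g) \<le> 1 - (exp s - 1) / s * w"
proof -
  define b where "b = (exp s - 1) / s"
  have g0: "0 \<le> g" using quadratic g zero_le_power2[of w] by linarith
  have b1: "1 \<le> b" using s exp_ge_add_one_self[of s] by (simp add: b_def field_simps)
  have "exp s \<le> 1 + s + s\<^sup>2" using exp_bound[of s] s by simp
  hence b2: "b \<le> 1 + s" using s by (simp add: b_def divide_le_eq power2_eq_square algebra_simps)
  have "b * w \<le> (1 + s) * (s / 2)" using b1 b2 w by (intro mult_mono) auto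
  also have "\<dots> \<le> (7/4) * (3/8)" using s by (intro mult_mono) auto
  finally have "g * (11/32) \<le> g * (1 - b * w)" using g0 by (intro mult_left_mono) auto
  moreover have "(b - 1) * w \<le> s * w" using b2 w by (intro mult_right_mono) auto
  ultimately have key: "w\<^sup>2 / 2 + (b - 1) * w \<le> g * (1 - b * w)"
    using linear quadratic g zero_le_power2[of w] by linarith
  have "exp (- w - g) * (1 + g) = exp (- w) * (exp (- g) * (1 + g))"
    by (simp add: exp_diff exp_minus field_simps)
  also have "\<dots> \<le> exp (- w) * 1"
    using exp_ge_add_one_self[of g] by (intro mult_left_mono) (auto simp: exp_minus field_simps)
  also have "\<dots> \<le> 1 - w + w\<^sup>2 / 2" using exp_minus_le_quadratic w by simp
  also have "\<dots> \<le> (1 - b * w) * (1 + g)" using key by (simp add: algebra_simps)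
  finally have "exp (- w - g) * (1 + g) \<le> (1 - b * w) * (1 + g)" .
  thus ?thesis using g0 by (simp add: b_def mult_le_cancel_right)
qed

lemma exp_neg_toll_le_chord:
  fixes P Q M r c :: real
  assumes P: "1 \<le> P" and Q: "1 \<le> Q" and M: "M = P + Q" and r: "0 < r"
    and cu: "c \<le> (P - Q)\<^sup>2 / M" and cl: "- 2 * P * Q / M \<le> c"
  shows "exp (- r * c - 12 * r\<^sup>2 * (2 * P * Q - 1))
           \<le> 1 + (1 - exp (- (r * M))) / (r * M) * (- r * c)"
proof -
  note B = split_sizes_basic[OF P Q M]
  have s: "r * M > 0" using r B by simp
  have "r\<^sup>2 * (P * Q) \<le> r\<^sup>2 * (2 * P * Q - 1)" "0 \<le> r\<^sup>2 * (P * Q)"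
    using B by (auto intro: mult_left_mono)
  moreover have "12 * r\<^sup>2 * (2 * P * Q - 1) = 12 * (r\<^sup>2 * (2 * P * Q - 1))" by simp
  ultimately have slack: "2 * (r\<^sup>2 * (P * Q)) \<le> 12 * r\<^sup>2 * (2 * P * Q - 1)" by linarith
  show ?thesis
  proof (cases "c \<ge> 0")
    case True
    have "- (r * M) \<le> - r * c" using toll_le_total[OF P Q M cu] r by simp
    hence "exp (- r * c) \<le> 1 + - r * c * (1 - exp (- (r * M))) / (r * M)"
      using True r s by (intro exp_le_chord_nonpos) auto
    moreover have "12 * r\<^sup>2 * (2 * P * Q - 1) \<ge> 0" using B by simp
    ultimately show ?thesis by (smt (verit) exp_le_cancel_iff mult.commute times_divide_eq_left)
  next
    case False
    have "r * (- 2 * P * Q / M) \<le> r * c" using cl r by (intro mult_left_mono) auto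
    hence z: "- r * c \<le> 2 * r * P * Q / M" by simp
    have "r * M * (- r * c) \<le> r * M * (2 * r * P * Q / M)" using z s by (intro mult_left_mono) auto
    hence linear: "r * M * (- r * c) \<le> 2 * (r\<^sup>2 * (P * Q))" using B by (simp add: power2_eq_square)
    have neg: "r * c < 0" using False r by (simp add: mult_pos_neg)
    hence quadratic: "(- r * c)\<^sup>2 \<le> r\<^sup>2 * (P * Q)"
      using power_mono[OF z, of 2] square_split_bound[OF P Q M, of r] by simp
    show ?thesis
      by (rule exp_le_chord_with_slack[OF s _ linear quadratic slack]) (use neg in simp)
  qed
qed

lemma exp_toll_le_chord:
  fixes P Q M t c :: real
  assumes P: "1 \<le> P" and Q: "1 \<le> Q" and M: "M = P + Q" and t: "0 < t"
    and small: "t * M \<le> 3/4"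
    and cu: "c \<le> (P - Q)\<^sup>2 / M" and cl: "- 2 * P * Q / M \<le> c"
  shows "exp (t * c - 12 * t\<^sup>2 * (2 * P * Q - 1))
           \<le> 1 + (exp (t * M) - 1) / (t * M) * (t * c)"
proof -
  note B = split_sizes_basic[OF P Q M]
  have s: "t * M > 0" using t B by simp
  have slack: "12 * (t\<^sup>2 * (P * Q)) \<le> 12 * t\<^sup>2 * (2 * P * Q - 1)"
    using B mult_left_mono[of "P * Q" "2 * P * Q - 1" "t\<^sup>2"] by (simp add: algebra_simps)
  show ?thesis
  proof (cases "c \<ge> 0")
    case True
    have "t * c \<le> t * M" using toll_le_total[OF P Q M cu] t by (intro mult_left_mono) auto
    hence "exp (t * c) \<le> 1 + t * c * (exp (t * M) - 1) / (t * M)"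
      using True t s by (intro exp_le_chord_nonneg) auto
    moreover have "12 * t\<^sup>2 * (2 * P * Q - 1) \<ge> 0" using B by simp
    ultimately show ?thesis by (smt (verit) exp_le_cancel_iff mult.commute times_divide_eq_left)
  next
    case False
    have "t * (- 2 * P * Q / M) \<le> t * c" using cl t by (intro mult_left_mono) auto
    hence w: "- (t * c) \<le> 2 * t * P * Q / M" by simp
    have "2 * t * P * Q / M = (t / (2 * M)) * (4 * P * Q)" by (simp add: field_simps)
    also have "\<dots> \<le> (t / (2 * M)) * M\<^sup>2" using B t by (intro mult_left_mono) auto
    also have "\<dots> = t * M / 2" using B by (simp add: power2_eq_square)
    finally have half: "- (t * c) \<le> t * M / 2" using w by linarith
    have "t * M * (- (t * c)) \<le> t * M * (2 * t * P * Q / M)" using w s by (intro mult_left_mono) auto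
    hence linear: "t * M * (- (t * c)) \<le> 2 * (t\<^sup>2 * (P * Q))" using B by (simp add: power2_eq_square)
    have neg: "t * c < 0" using False t by (simp add: mult_pos_neg)
    hence quadratic: "(- (t * c))\<^sup>2 \<le> t\<^sup>2 * (P * Q)"
      using power_mono[OF w, of 2] square_split_bound[OF P Q M, of t] by simp
    have "exp (- (- (t * c)) - 12 * t\<^sup>2 * (2 * P * Q - 1))
        \<le> 1 - (exp (t * M) - 1) / (t * M) * - (t * c)"
      by (rule exp_minus_le_chord_with_slack[OF s small _ half linear quadratic slack]) (use neg in simp)
    thus ?thesis by simp
  qed
qed

lemma toll_excess_nonpos_few:
  fixes P Q M t c :: real
  assumes P: "1 \<le> P" and Q: "1 \<le> Q" and M: "M = P + Q" and t: "0 < t"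
    and M20: "M \<le> 20" and moderate: "t * M \<ge> 3/4"
    and cu: "c \<le> (P - Q)\<^sup>2 / M"
  shows "t * c - 12 * t\<^sup>2 * (2 * P * Q - 1) \<le> 0"
proof -
  note B = split_sizes_basic[OF P Q M]
  have M2: "M \<ge> 2" using P Q M by simp
  have "(P - Q)\<^sup>2 \<le> (M - 2)\<^sup>2" using B by (simp add: power2_eq_square algebra_simps)
  hence "(P - Q)\<^sup>2 / M \<le> (M - 2)\<^sup>2 / M" using B by (intro divide_right_mono) auto
  hence "t * c \<le> t * ((M - 2)\<^sup>2 / M)" using cu t by (intro mult_left_mono) auto
  also have "\<dots> \<le> 12 * t\<^sup>2 * (2 * M - 3)"
  proof -
    have "(M - 2) * (20 - M) \<ge> 0" using M20 M2 by (intro mult_nonneg_nonneg) auto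
    moreover have "(M - 2)\<^sup>2 = 9 * (2 * M - 3) - (M - 2) * (20 - M) - 9"
      by (simp add: power2_eq_square algebra_simps)
    moreover have "9 \<le> 12 * (t * M)" using moderate by linarith
    hence "9 * (2 * M - 3) \<le> 12 * (t * M) * (2 * M - 3)"
      using M2 by (intro mult_right_mono) auto
    ultimately have "(M - 2)\<^sup>2 \<le> 12 * (t * M) * (2 * M - 3)" by linarith
    hence "t * (M - 2)\<^sup>2 / M \<le> t * (12 * (t * M) * (2 * M - 3)) / M"
      using t B by (intro divide_right_mono mult_left_mono) auto
    thus ?thesis using B by (simp add: power2_eq_square)
  qed
  also have "\<dots> \<le> 12 * t\<^sup>2 * (2 * P * Q - 1)" using B by (intro mult_left_mono) auto
  finally show ?thesis by simp
qed

lemma toll_excess_le_edge: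
  fixes P Q M t c :: real
  assumes P: "1 \<le> P" and Q: "1 \<le> Q" and M: "M = P + Q" and t: "0 < t"
    and PM: "P \<le> M / 4" and cu: "c \<le> (P - Q)\<^sup>2 / M"
  shows "t * c - 12 * t\<^sup>2 * (2 * P * Q - 1) \<le> (t * M + 12 * t\<^sup>2) - P * (t * (2 + 18 * (t * M)))"
proof -
  have "c \<le> Q - P" using toll_le_size_diff[OF P Q M _ cu] PM M P by simp
  hence toll: "t * c \<le> t * (M - 2 * P)" using t M by (intro mult_left_mono) auto
  have "P * (3 * M / 4) \<le> P * Q" using PM M P by (intro mult_left_mono) auto
  hence "12 * t\<^sup>2 * (3 / 2 * P * M - 1) \<le> 12 * t\<^sup>2 * (2 * P * Q - 1)" by (intro mult_left_mono) auto
  thus ?thesis using toll by (simp add: power2_eq_square algebra_simps)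
qed

lemma toll_excess_le_bulk:
  fixes P Q M t c :: real
  assumes P: "1 \<le> P" and Q: "1 \<le> Q" and M: "M = P + Q" and t: "0 < t"
    and PQ: "P \<le> Q" and PM: "P \<ge> M / 4" and M21: "M \<ge> 21" and cu: "c \<le> (P - Q)\<^sup>2 / M"
  shows "t * c - 12 * t\<^sup>2 * (2 * P * Q - 1) \<le> (t * M) / 2 - 4 * (t * M)\<^sup>2"
proof -
  have "c \<le> Q - P" by (rule toll_le_size_diff[OF P Q M PQ cu])
  also have "Q - P \<le> M / 2" using PM M by simp
  finally have toll: "t * c \<le> t * M / 2" using t by (simp add: mult_left_mono)
  have "(P - M / 4) * (3 * M / 4 - P) \<ge> 0" using PM PQ M by (intro mult_nonneg_nonneg) auto
  moreover have "(P - M / 4) * (3 * M / 4 - P) = P * Q - 3 * M\<^sup>2 / 16"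
    using M by (simp add: power2_eq_square field_simps)
  ultimately have "3 * M\<^sup>2 / 8 - 1 \<le> 2 * P * Q - 1" by linarith
  hence prod: "12 * t\<^sup>2 * (3 * M\<^sup>2 / 8 - 1) \<le> 12 * t\<^sup>2 * (2 * P * Q - 1)" by (intro mult_left_mono) auto
  have "21 * 21 \<le> M * M" using M21 by (intro mult_mono) auto
  hence "24 \<le> M\<^sup>2" by (simp add: power2_eq_square)
  hence "t\<^sup>2 * 24 \<le> t\<^sup>2 * M\<^sup>2" by (intro mult_left_mono) auto
  hence "12 * t\<^sup>2 \<le> (t * M)\<^sup>2 / 2" by (simp add: power_mult_distrib)
  moreover have "12 * t\<^sup>2 * (3 * M\<^sup>2 / 8 - 1) = 9 / 2 * (t * M)\<^sup>2 - 12 * t\<^sup>2"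
    by (simp add: power_mult_distrib algebra_simps)
  ultimately show ?thesis using toll prod by linarith
qed

lemma mgf_exponent_excess_le_balanced:
  fixes x y s t C :: real
  assumes x: "0 \<le> x" "x \<le> y" and y: "y \<le> 21/4" and s: "21/4 < s" and t: "0 < t"
    and sum: "x + y = s - t" and C: "C \<le> y - x"
  shows "mgf_exponent x + mgf_exponent y + C - mgf_exponent s \<le> -1"
proof -
  have "x\<^sup>2 + y\<^sup>2 \<le> (x + y)\<^sup>2" using x by (simp add: power2_eq_square algebra_simps)
  also have "(x + y)\<^sup>2 \<le> s\<^sup>2" using sum x t by (intro power_mono) auto
  finally have "12 * x\<^sup>2 + 12 * y\<^sup>2 \<le> 12 * s\<^sup>2" by simp
  moreover have "y - x \<le> s" using sum x t by simp
  moreover have "12 * s\<^sup>2 + s + 1 \<le> 2 * (exp s - 1 - s)"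
    using s by (intro quadratic_le_mgf_exponent_large) auto
  moreover have "mgf_exponent x = 12 * x\<^sup>2" "mgf_exponent y = 12 * y\<^sup>2"
    using x y by (auto intro: mgf_exponent_small)
  ultimately show ?thesis using C by (simp add: mgf_exponent_large[OF s])
qed

lemma mgf_exponent_excess_le_unbalanced:
  fixes x y s t C :: real
  assumes x: "0 \<le> x" "x \<le> y" and y: "21/4 < y" and t: "0 < t" "t \<le> s / 2"
    and sum: "x + y = s - t" and C: "C \<le> y - x"
  shows "mgf_exponent x + mgf_exponent y + C - mgf_exponent s
    \<le> max (-1) (s + t - (x + t) * (exp s - 14))"
proof -
  define u where "u = x + t"
  define e where "e = mgf_exponent x + mgf_exponent y + C - mgf_exponent s"
  have s: "21/4 < s" using sum x y t by linarith
  have "exp y = exp s * exp (- u)" using sum by (simp add: u_def flip: exp_add)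
  hence base: "e \<le> 2 * (exp x - 1 - x) + 12 * x\<^sup>2 + s + t - 2 * exp s * (1 - exp (- u))"
    using mgf_exponent_le[of x] mgf_exponent_large[OF y] mgf_exponent_large[OF s] C sum
    by (simp add: e_def algebra_simps)
  have "e \<le> s + t - u * (exp s - 14) \<or> e \<le> -1"
  proof (cases "u \<le> 1")
    case True
    have u0: "u \<ge> 0" and x1: "x \<le> 1" using u_def x t True by auto
    have "exp x \<le> 1 + x + x\<^sup>2" using exp_bound[OF x(1) x1] .
    moreover have "x\<^sup>2 \<le> x" using x x1 by (simp add: power2_eq_square mult_left_le)
    ultimately have small_x: "2 * (exp x - 1 - x) + 12 * x\<^sup>2 \<le> 14 * u" using u_def t by simp
    have "u\<^sup>2 \<le> u" using u0 True by (simp add: power2_eq_square mult_left_le)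
    hence "u / 2 \<le> 1 - exp (- u)" using exp_minus_le_quadratic[OF u0] by simp
    hence "exp s * u \<le> 2 * exp s * (1 - exp (- u))"
      using mult_left_mono[of "u/2" "1 - exp (- u)" "2 * exp s"] by simp
    thus ?thesis using base small_x by (simp add: algebra_simps)
  next
    case False
    have "exp (- u) \<le> 2/5" using False exp_minus_one_le by (smt (verit) exp_le_cancel_iff)
    hence "6/5 * exp s \<le> 2 * exp s * (1 - exp (- u))"
      using mult_left_mono[of "3/5" "1 - exp (- u)" "2 * exp s"] by simp
    moreover have xs: "x \<le> s / 2" using sum x t by simp
    hence "2 * (exp x - 1 - x) \<le> 2 * exp (s/2)"
      using x by (smt (verit) exp_le_cancel_iff)
    moreover have "x\<^sup>2 \<le> (s/2)\<^sup>2" using xs x by (intro power_mono) auto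
    hence "12 * x\<^sup>2 \<le> 3 * s\<^sup>2" by (simp add: power2_eq_square)
    moreover have "2 * exp (s/2) + 3 * s\<^sup>2 + 3/2 * s + 1 \<le> 6/5 * exp s"
      using s by (intro exp_half_quadratic_le_exp) auto
    ultimately have "e \<le> -1" using base t by linarith
    thus ?thesis ..
  qed
  thus ?thesis by (auto simp: e_def u_def)
qed

lemma mgf_exponent_excess_le_large:
  fixes x y s t C :: real
  assumes "0 \<le> x" "x \<le> y" and "21/4 < s" and "0 < t" "t \<le> s / 2"
    and "x + y = s - t" and "C \<le> y - x"
  shows "mgf_exponent x + mgf_exponent y + C - mgf_exponent s
    \<le> max (-1) (s + t - (x + t) * (exp s - 14))"
  using mgf_exponent_excess_le_balanced[of x y s t C] mgf_exponent_excess_le_unbalanced[of x y t s C]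
    assms by (cases "y \<le> 21/4") auto

section \<open>Summing the pointwise bounds\<close>

lemma sum_exp_le_of_linear_majorant:
  fixes y z :: "nat \<Rightarrow> real" and b :: real
  assumes "\<And>a. a < n \<Longrightarrow> exp (y a) \<le> 1 + b * z a" and "(\<Sum>a<n. z a) = 0"
  shows "(\<Sum>a<n. exp (y a)) \<le> real n"
proof -
  have "(\<Sum>a<n. exp (y a)) \<le> (\<Sum>a<n. 1 + b * z a)" using assms(1) by (intro sum_mono) auto
  also have "\<dots> = real n + b * (\<Sum>a<n. z a)" by (simp add: sum.distrib sum_distrib_left)
  finally show ?thesis using assms(2) by simp
qed

lemma sum_exp_geometric_le:
  fixes A k :: real assumes k: "k > 0"
  shows "(\<Sum>a<n. exp (A - k * (real a + 1))) \<le> exp A / (exp k - 1)"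
proof -
  define r where "r = exp (- k)"
  have r: "0 < r" "r < 1" using k by (auto simp: r_def)
  have "exp (A - k * (real a + 1)) = exp A * r * r ^ a" for a
    by (simp add: r_def algebra_simps flip: exp_of_nat_mult exp_add)
  hence "(\<Sum>a<n. exp (A - k * (real a + 1))) = exp A * r * (\<Sum>a<n. r ^ a)"
    by (simp add: sum_distrib_left)
  also have "\<dots> = exp A * r * ((1 - r ^ n) / (1 - r))" using r by (simp add: sum_gp_strict)
  also have "\<dots> \<le> exp A * r * (1 / (1 - r))"
    using r by (intro mult_left_mono divide_right_mono) auto
  also have "\<dots> = exp A / (exp k - 1)"
    using r k by (simp add: r_def exp_minus field_simps)
  finally show ?thesis .
qed

lemma geometric_tail_le:
  fixes k A X :: real
  assumes k: "k > 0" and AX: "A - k/2 \<le> X"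
  shows "2 * exp A / (exp k - 1) \<le> 2 * exp X / k"
proof -
  have "2 * exp A / (exp k - 1) \<le> 2 * exp A / (k * exp (k/2))"
    using mult_exp_half_le_exp_minus_one[of k] k by (intro divide_left_mono) auto
  also have "\<dots> = 2 * exp (A - k/2) / k"
  proof -
    have "exp A = exp (A - k/2) * exp (k/2)" by (simp flip: exp_add)
    thus ?thesis using k by (simp add: field_simps)
  qed
  also have "\<dots> \<le> 2 * exp X / k" using AX k by (intro divide_right_mono) auto
  finally show ?thesis .
qed

lemma sum_exp_le_symmetric_geometric:
  fixes y :: "nat \<Rightarrow> real" and A k X B :: real
  assumes k: "k > 0" and AX: "A - k/2 \<le> X"
    and sym: "\<And>a. a < n \<Longrightarrow> y (n - 1 - a) = y a"
    and half: "\<And>a. a < n \<Longrightarrow> real a \<le> real (n - 1 - a) \<Longrightarrow>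
                  exp (y a) \<le> exp (A - k * (real a + 1)) + B"
  shows "(\<Sum>a<n. exp (y a)) \<le> 2 * exp X / k + real n * B"
proof -
  let ?F = "\<lambda>x. exp (A - k * x)"
  have both: "exp (y a) \<le> ?F (real a + 1) + ?F (real n - real a) + B" if a: "a < n" for a
  proof (cases "real a \<le> real (n - 1 - a)")
    case True
    thus ?thesis using half[OF a True] exp_gt_zero[of "A - k * (real n - real a)"] by linarith
  next
    case False
    define a' where "a' = n - 1 - a"
    have a': "a' < n" "n - 1 - a' = a" "real a' + 1 = real n - real a"
      using a by (auto simp: a'_def of_nat_diff)
    hence "exp (y a') \<le> ?F (real n - real a) + B" using half[of a'] False by simp
    moreover have "y a' = y a" using sym[OF a] by (simp add: a'_def)
    ultimately have "exp (y a) \<le> ?F (real n - real a) + B" by simp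
    thus ?thesis using exp_gt_zero[of "A - k * (real a + 1)"] by linarith
  qed
  have mirror: "(\<Sum>a<n. ?F (real n - real a)) = (\<Sum>a<n. ?F (real a + 1))"
  proof -
    have "(\<Sum>a<n. ?F (real n - real a)) = (\<Sum>a<n. ?F (real (n - Suc a) + 1))"
      by (intro sum.cong refl) (auto simp: of_nat_diff)
    also have "\<dots> = (\<Sum>a<n. ?F (real a + 1))" by (rule sum.nat_diff_reindex)
    finally show ?thesis .
  qed
  have "(\<Sum>a<n. exp (y a)) \<le> (\<Sum>a<n. ?F (real a + 1) + ?F (real n - real a) + B)"
    using both by (intro sum_mono) auto
  also have "\<dots> = 2 * (\<Sum>a<n. ?F (real a + 1)) + real n * B"
    using mirror by (simp add: sum.distrib)
  also have "\<dots> \<le> 2 * exp A / (exp k - 1) + real n * B"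
    using sum_exp_geometric_le[OF k, of A n] by simp
  also have "\<dots> \<le> 2 * exp X / k + real n * B"
    using geometric_tail_le[OF k AX] by simp
  finally show ?thesis .
qed

section \<open>The induction step for abstract tolls\<close>

locale toll_bounds =
  fixes n :: nat and c :: "nat \<Rightarrow> real"
  assumes toll_upper: "\<And>a. a < n \<Longrightarrow> c a \<le> ((real a + 1) - (real n - real a))\<^sup>2 / (real n + 1)"
    and toll_lower: "\<And>a. a < n \<Longrightarrow> - 2 * (real a + 1) * (real n - real a) / (real n + 1) \<le> c a"
    and toll_sym: "\<And>a. a < n \<Longrightarrow> c (n - 1 - a) = c a"
    and toll_sum: "(\<Sum>a<n. c a) = 0"
begin

lemma split_sizes:
  assumes "a < n"
  shows "1 \<le> real a + 1" "1 \<le> real n - real a" "real n + 1 = (real a + 1) + (real n - real a)"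
  using assms by auto

lemma squares_split:
  assumes "a < n"
  shows "(x * real a)\<^sup>2 + (x * real (n - 1 - a))\<^sup>2 - (x * real n)\<^sup>2
          = - (x\<^sup>2 * (2 * (real a + 1) * (real n - real a) - 1))"
  using assms by (simp add: of_nat_diff power2_eq_square algebra_simps)

lemma sum_exp_quadratic_step:
  assumes r: "r > 0"
  shows "(\<Sum>a<n. exp (12 * (r * real a)\<^sup>2 + 12 * (r * real (n - 1 - a))\<^sup>2 + (- r) * c a))
           \<le> real n * exp (12 * (r * real n)\<^sup>2)"
proof -
  define y where "y a = 12 * (r * real a)\<^sup>2 + 12 * (r * real (n - 1 - a))\<^sup>2 + (- r) * c a
    - 12 * (r * real n)\<^sup>2" for a
  have "(\<Sum>a<n. exp (y a)) \<le> real n"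
  proof (rule sum_exp_le_of_linear_majorant)
    fix a assume a: "a < n"
    have "y a = - r * c a - 12 * r\<^sup>2 * (2 * (real a + 1) * (real n - real a) - 1)"
      using squares_split[OF a, of r] by (simp add: y_def algebra_simps)
    thus "exp (y a) \<le> 1 + (1 - exp (- (r * (real n + 1)))) / (r * (real n + 1)) * (- r * c a)"
      using exp_neg_toll_le_chord[OF split_sizes[OF a] r toll_upper[OF a] toll_lower[OF a]] by simp
  next
    have "(\<Sum>a<n. - r * c a) = - r * (\<Sum>a<n. c a)" by (simp add: sum_distrib_left)
    thus "(\<Sum>a<n. - r * c a) = 0" using toll_sum by simp
  qed
  moreover have "(\<Sum>a<n. exp (12 * (r * real a)\<^sup>2 + 12 * (r * real (n - 1 - a))\<^sup>2 + (- r) * c a))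
      = (\<Sum>a<n. exp (y a)) * exp (12 * (r * real n)\<^sup>2)"
    by (simp add: y_def sum_distrib_right flip: exp_add)
  ultimately show ?thesis by (simp add: mult_right_mono)
qed

definition excess :: "real \<Rightarrow> nat \<Rightarrow> real" where
  "excess t a = mgf_exponent (t * real a) + mgf_exponent (t * real (n - 1 - a)) + t * c a
     - mgf_exponent (t * real n)"

lemma excess_sym: "a < n \<Longrightarrow> excess t (n - 1 - a) = excess t a"
  using toll_sym[of a] by (simp add: excess_def algebra_simps)

lemma excess_quadratic:
  assumes t: "t > 0" and "t * real n \<le> 21/4" and a: "a < n"
  shows "excess t a = t * c a - 12 * t\<^sup>2 * (2 * (real a + 1) * (real n - real a) - 1)"
proof -
  have "t * real a \<le> t * real n" "t * real (n - 1 - a) \<le> t * real n"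
    using t a by (auto intro!: mult_left_mono)
  hence "mgf_exponent (t * real a) = 12 * (t * real a)\<^sup>2"
    "mgf_exponent (t * real (n - 1 - a)) = 12 * (t * real (n - 1 - a))\<^sup>2"
    "mgf_exponent (t * real n) = 12 * (t * real n)\<^sup>2"
    using assms(2) by (auto intro!: mgf_exponent_small)
  thus ?thesis using squares_split[OF a, of t] unfolding excess_def by (simp add: algebra_simps)
qed

lemma exp_excess_le_large_half:
  assumes t: "t > 0" and n: "n \<ge> 2" and large: "21/4 < t * real n"
    and a: "a < n" and half: "real a \<le> real (n - 1 - a)"
  shows "exp (excess t a)
    \<le> exp (t * real n + t - t * (exp (t * real n) - 14) * (real a + 1)) + exp (-1)"
proof -
  have "c a \<le> (real n - real a) - (real a + 1)"
    using toll_le_size_diff[OF split_sizes[OF a] _ toll_upper[OF a]] half a by (simp add: of_nat_diff)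
  hence "t * c a \<le> t * ((real n - real a) - (real a + 1))" using t by (intro mult_left_mono) auto
  hence C: "t * c a \<le> t * real (n - 1 - a) - t * real a" using a by (simp add: of_nat_diff algebra_simps)
  have "t * real a \<le> t * real (n - 1 - a)" using half t by (intro mult_left_mono) auto
  moreover have "t * real a + t * real (n - 1 - a) = t * real n - t" using a by (simp add: of_nat_diff algebra_simps)
  moreover have "t \<le> t * real n / 2" using n t by simp
  ultimately have "excess t a \<le> max (-1) (t * real n + t - (t * real a + t) * (exp (t * real n) - 14))"
    unfolding excess_def using t large C by (intro mgf_exponent_excess_le_large) auto
  hence "exp (excess t a) \<le> exp (max (-1) (t * real n + t - (t * real a + t) * (exp (t * real n) - 14)))"
    by simp
  also have "\<dots> \<le> exp (-1) + exp (t * real n + t - (t * real a + t) * (exp (t * real n) - 14))"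
    by (simp add: max_def)
  finally show ?thesis by (simp add: algebra_simps)
qed

lemma sum_exp_excess_le_large:
  assumes t: "t > 0" and n: "n \<ge> 2" and large: "t * real n > 21/4"
  shows "(\<Sum>a<n. exp (excess t a)) \<le> real n"
proof -
  define s where "s = t * real n"
  define k where "k = t * (exp s - 14)"
  have s: "s > 21/4" using large by (simp add: s_def)
  have es: "exp s \<ge> 185" using exp_ge_185 s by simp
  have k: "k > 0" using t es by (simp add: k_def)
  have "(\<Sum>a<n. exp (excess t a)) \<le> 2 * exp s / k + real n * exp (-1)"
  proof (rule sum_exp_le_symmetric_geometric[where y = "excess t", OF k _ excess_sym])
    show "s + t - k/2 \<le> s" using t es by (simp add: k_def)
  next
    fix a assume "a < n" "real a \<le> real (n - 1 - a)"
    from exp_excess_le_large_half[OF t n large this]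
    show "exp (excess t a) \<le> exp (s + t - k * (real a + 1)) + exp (-1)" unfolding s_def k_def .
  qed
  also have "2 * exp s / k \<le> real n / 2"
  proof -
    have "(s / (2 * t)) * k = s * (exp s - 14) / 2" using t by (simp add: k_def field_simps)
    hence "2 * exp s \<le> (s / (2 * t)) * k"
      using four_exp_le_mult_exp_minus_14[OF less_imp_le[OF s]] by linarith
    hence "2 * exp s / k \<le> s / (2 * t)" by (rule mult_imp_div_pos_le[OF k])
    thus ?thesis using t by (simp add: s_def)
  qed
  also have "real n * exp (-1) \<le> real n / 2"
    using exp_minus_one_le mult_left_mono[of "exp (-1)" "1/2" "real n"] by simp
  finally show ?thesis by simp
qed

lemma sum_exp_excess_le_small:
  assumes t: "t > 0" and "t * real n \<le> 21/4" and small: "t * (real n + 1) \<le> 3/4"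
  shows "(\<Sum>a<n. exp (excess t a)) \<le> real n"
proof (rule sum_exp_le_of_linear_majorant)
  fix a assume a: "a < n"
  show "exp (excess t a) \<le> 1 + (exp (t * (real n + 1)) - 1) / (t * (real n + 1)) * (t * c a)"
    unfolding excess_quadratic[OF assms(1,2) a]
    by (rule exp_toll_le_chord[OF split_sizes[OF a] t small toll_upper[OF a] toll_lower[OF a]])
next
  have "(\<Sum>a<n. t * c a) = t * (\<Sum>a<n. c a)" by (simp add: sum_distrib_left)
  thus "(\<Sum>a<n. t * c a) = 0" using toll_sum by simp
qed

lemma sum_exp_excess_le_few:
  assumes t: "t > 0" and "t * real n \<le> 21/4" and moderate: "t * (real n + 1) \<ge> 3/4"
    and "n \<le> 19"
  shows "(\<Sum>a<n. exp (excess t a)) \<le> real n"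
proof -
  have "excess t a \<le> 0" if a: "a < n" for a
    unfolding excess_quadratic[OF assms(1,2) a]
    by (rule toll_excess_nonpos_few[OF split_sizes[OF a] t _ moderate toll_upper[OF a]])
      (use assms in simp)
  hence "(\<Sum>a<n. exp (excess t a)) \<le> (\<Sum>a<n. 1)" by (intro sum_mono) auto
  thus ?thesis by simp
qed

lemma exp_excess_le_many_half:
  assumes t: "t > 0" and "t * real n \<le> 21/4" and "n \<ge> 20"
    and a: "a < n" and half: "real a \<le> real (n - 1 - a)"
  shows "exp (excess t a) \<le> exp ((t * (real n + 1) + 12 * t\<^sup>2)
            - t * (2 + 18 * (t * (real n + 1))) * (real a + 1))
          + exp (t * (real n + 1) / 2 - 4 * (t * (real n + 1))\<^sup>2)"
proof (cases "real a + 1 \<le> (real n + 1) / 4")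
  case True
  have "excess t a \<le> (t * (real n + 1) + 12 * t\<^sup>2)
      - (real a + 1) * (t * (2 + 18 * (t * (real n + 1))))"
    unfolding excess_quadratic[OF assms(1,2) a]
    by (rule toll_excess_le_edge[OF split_sizes[OF a] t True toll_upper[OF a]])
  thus ?thesis by (smt (verit) exp_gt_zero exp_le_cancel_iff mult.commute)
next
  case False
  have "excess t a \<le> t * (real n + 1) / 2 - 4 * (t * (real n + 1))\<^sup>2"
    unfolding excess_quadratic[OF assms(1,2) a]
    by (rule toll_excess_le_bulk[OF split_sizes[OF a] t _ _ _ toll_upper[OF a]])
      (use False half a assms in \<open>auto simp: of_nat_diff\<close>)
  thus ?thesis by (smt (verit) exp_gt_zero exp_le_cancel_iff)
qed

lemma sum_exp_excess_le_many:
  assumes t: "t > 0" and moderate_upper: "t * real n \<le> 21/4"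
    and moderate: "t * (real n + 1) \<ge> 3/4" and n20: "n \<ge> 20"
  shows "(\<Sum>a<n. exp (excess t a)) \<le> real n"
proof -
  define s' where "s' = t * (real n + 1)"
  define k where "k = t * (2 + 18 * s')"
  have "s' > 0" using t by (simp add: s'_def)
  hence k: "k > 0" using t by (simp add: k_def)
  have "(\<Sum>a<n. exp (excess t a)) \<le> 2 * exp (t * real n) / k + real n * exp (s' / 2 - 4 * s'\<^sup>2)"
  proof (rule sum_exp_le_symmetric_geometric[where y = "excess t", OF k _ excess_sym])
    have "21 * t \<le> s'" using n20 t by (simp add: s'_def)
    hence "12 * t\<^sup>2 \<le> 9 * t * s'" using t by (simp add: power2_eq_square)
    thus "s' + 12 * t\<^sup>2 - k/2 \<le> t * real n" by (simp add: s'_def k_def algebra_simps)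
  next
    fix a assume "a < n" "real a \<le> real (n - 1 - a)"
    from exp_excess_le_many_half[OF t moderate_upper n20 this]
    show "exp (excess t a) \<le> exp (s' + 12 * t\<^sup>2 - k * (real a + 1)) + exp (s' / 2 - 4 * s'\<^sup>2)"
      by (simp add: s'_def k_def)
  qed
  also have "\<dots> \<le> real n"
    using moderate_range_bound_scaled[OF t _ moderate moderate_upper] n20 by (simp add: s'_def k_def)
  finally show ?thesis .
qed

lemma sum_exp_mgf_exponent_step:
  assumes t: "t > 0" and n: "n \<ge> 2"
  shows "(\<Sum>a<n. exp (mgf_exponent (t * real a) + mgf_exponent (t * real (n - 1 - a)) + t * c a))
           \<le> real n * exp (mgf_exponent (t * real n))"
proof -
  have "(\<Sum>a<n. exp (excess t a)) \<le> real n"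
    using sum_exp_excess_le_large[OF t n] sum_exp_excess_le_small[OF t]
      sum_exp_excess_le_few[OF t] sum_exp_excess_le_many[OF t]
    by (cases "t * real n > 21/4"; cases "t * (real n + 1) \<le> 3/4"; cases "n \<le> 19") auto
  moreover have "(\<Sum>a<n. exp (mgf_exponent (t * real a) + mgf_exponent (t * real (n - 1 - a)) + t * c a))
      = (\<Sum>a<n. exp (excess t a)) * exp (mgf_exponent (t * real n))"
    by (simp add: excess_def sum_distrib_right flip: exp_add)
  ultimately show ?thesis by (simp add: mult_right_mono)
qed

end

section \<open>The Quicksort recursion\<close>

lemma qs_upto_length: "length (qs_upto n) = Suc n"
  by (induction n) (simp_all add: Let_def)

lemma qs_upto_nth: "k \<le> n \<Longrightarrow> qs_upto n ! k = qs_pmf k"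
proof (induction n arbitrary: k)
  case 0 thus ?case by (simp add: qs_pmf_def)
next
  case (Suc m)
  thus ?case
    by (cases "k = Suc m") (simp_all add: qs_pmf_def Let_def nth_append qs_upto_length)
qed

lemma qs_pmf_0: "qs_pmf 0 = return_pmf 0"
  by (simp add: qs_pmf_def)

lemma qs_pmf_Suc:
  "qs_pmf (Suc m) = pmf_of_set {1..Suc m} \<bind>
     (\<lambda>u. qs_pmf (u - 1) \<bind> (\<lambda>a. qs_pmf (Suc m - u) \<bind> (\<lambda>b. return_pmf (a + b + m))))"
  unfolding qs_pmf_def
  by (auto simp: Let_def nth_append qs_upto_length qs_upto_nth intro!: bind_pmf_cong)

lemma qs_pmf_finite: "finite (set_pmf (qs_pmf n))"
proof (induction n rule: less_induct)
  case (less n)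
  show ?case
  proof (cases n)
    case 0 thus ?thesis by (simp add: qs_pmf_0)
  next
    case (Suc m)
    thus ?thesis using less.IH
      by (auto simp: qs_pmf_Suc set_bind_pmf intro!: finite_UN_I)
  qed
qed

lemma expectation_bind_finite:
  fixes h :: "'b \<Rightarrow> real"
  assumes "finite (set_pmf p)" "\<And>x. x \<in> set_pmf p \<Longrightarrow> finite (set_pmf (f x))"
  shows "measure_pmf.expectation (p \<bind> f) h
    = measure_pmf.expectation p (\<lambda>x. measure_pmf.expectation (f x) h)"
  using assms
  by (simp add: pmf_expectation_bind[of "set_pmf p"] integral_measure_pmf[of "set_pmf p"])

definition qs_mgf :: "nat \<Rightarrow> real \<Rightarrow> real" where
  "qs_mgf n t = measure_pmf.expectation (qs_pmf n) (\<lambda>k. exp (t * (real k - qs_mean n)))"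

definition qs_toll :: "nat \<Rightarrow> nat \<Rightarrow> real" where
  "qs_toll n a = real n - 1 + qs_mean a + qs_mean (n - 1 - a) - qs_mean n"

lemma qs_mgf_nonneg: "qs_mgf n t \<ge> 0"
  unfolding qs_mgf_def by (intro integral_nonneg_AE) auto

lemma qs_mean_0: "qs_mean 0 = 0"
  by (simp add: qs_mean_def harm_def)

lemma qs_mean_1: "qs_mean 1 = 0"
  by (simp add: qs_mean_def harm_def)

lemma qs_mgf_0: "qs_mgf 0 t = 1"
  by (simp add: qs_mgf_def qs_pmf_0 qs_mean_0)

lemma expectation_qs_sum:
  "measure_pmf.expectation (qs_pmf i \<bind> (\<lambda>a. qs_pmf j \<bind> (\<lambda>b. return_pmf (a + b + m))))
      (\<lambda>k. exp (t * (real k - x)))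
    = qs_mgf i t * qs_mgf j t * exp (t * (real m + qs_mean i + qs_mean j - x))"
proof -
  have split: "exp (t * (real a + real b + real m - x)) = exp (t * (real b - qs_mean j))
      * (exp (t * (real a - qs_mean i)) * exp (t * (real m + qs_mean i + qs_mean j - x)))" for a b
    by (simp add: algebra_simps flip: exp_add)
  show ?thesis
    by (simp add: expectation_bind_finite qs_pmf_finite split qs_mgf_def)
qed

lemma qs_mgf_recurrence:
  assumes "n \<ge> 1"
  shows "qs_mgf n t = (\<Sum>a<n. qs_mgf a t * qs_mgf (n - 1 - a) t * exp (t * qs_toll n a)) / real n"
proof -
  obtain m where m: "n = Suc m" using assms by (cases n) auto
  let ?h = "\<lambda>k. exp (t * (real k - qs_mean n))"
  have "qs_mgf n t = measure_pmf.expectation (pmf_of_set {1..Suc m}) (\<lambda>u.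
      measure_pmf.expectation (qs_pmf (u - 1) \<bind> (\<lambda>a. qs_pmf (Suc m - u) \<bind>
        (\<lambda>b. return_pmf (a + b + m)))) ?h)"
    unfolding m qs_mgf_def[of "Suc m"] qs_pmf_Suc
    by (subst expectation_bind_finite) (auto simp: qs_pmf_finite set_bind_pmf intro!: finite_UN_I)
  also have "\<dots> = (\<Sum>u\<in>{1..Suc m}. qs_mgf (u - 1) t * qs_mgf (Suc m - u) t
      * exp (t * (real m + qs_mean (u - 1) + qs_mean (Suc m - u) - qs_mean n))) / real (Suc m)"
    by (simp add: integral_pmf_of_set expectation_qs_sum)
  also have "\<dots> = (\<Sum>a\<in>{0..m}. qs_mgf a t * qs_mgf (m - a) t
      * exp (t * (real m + qs_mean a + qs_mean (m - a) - qs_mean n))) / real (Suc m)"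
    unfolding One_nat_def sum.shift_bounds_cl_Suc_ivl by simp
  also have "{0..m} = {..<n}" using m by auto
  finally show ?thesis using m by (simp add: qs_toll_def)
qed

section \<open>Bounds on the centred toll\<close>

lemma harm_diff_ge:
  assumes p: "1 \<le> p" and pm: "p \<le> m"
  shows "(real m - real p) / real m \<le> (harm m - harm p :: real)"
  using pm
proof (induction m rule: dec_induct)
  case base thus ?case by simp
next
  case (step k)
  have "real k + 1 > 0" by simp
  hence "(real (Suc k) - real p) / real (Suc k) = (real k - real p) / (real k + 1) + 1 / (real k + 1)"
    by (simp add: field_simps)
  also have "(real k - real p) / (real k + 1) \<le> (real k - real p) / real k"
    using p step.hyps by (intro divide_left_mono) auto
  finally show ?case using step.IH by (simp add: harm_Suc inverse_eq_divide add_ac)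
qed

text \<open>The step from m to m + 1 amounts to (m - p)^2 + m \<ge> 0.\<close>

lemma harm_diff_le:
  assumes p: "1 \<le> p" and pm: "p \<le> m"
  shows "(harm m - harm p :: real) \<le> ((real m)\<^sup>2 - (real p)\<^sup>2) / (2 * real m * real p)"
  using pm
proof (induction m rule: dec_induct)
  case base thus ?case by simp
next
  case (step k)
  have p0: "real p > 0" and m0: "real k > 0" using p step.hyps by auto
  have "1 / (real k + 1) \<le> ((real k + 1)\<^sup>2 - (real p)\<^sup>2) / (2 * (real k + 1) * real p)
      - ((real k)\<^sup>2 - (real p)\<^sup>2) / (2 * real k * real p)"
  proof -
    have "0 \<le> ((real k - real p)\<^sup>2 + real k) / (2 * real k * real p * (real k + 1))"
      using p0 m0 by simp
    also have "\<dots> = ((real k + 1)\<^sup>2 - (real p)\<^sup>2) / (2 * (real k + 1) * real p)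
      - ((real k)\<^sup>2 - (real p)\<^sup>2) / (2 * real k * real p) - 1 / (real k + 1)"
      using p0 m0 by (simp add: divide_simps) (simp add: algebra_simps power2_eq_square)
    finally show ?thesis by simp
  qed
  thus ?case using step.IH by (simp add: harm_Suc inverse_eq_divide add_ac)
qed

lemma qs_mean_eq_harm_Suc: "qs_mean k = 2 * (real k + 1) * harm (Suc k) - 2 - 4 * real k"
  by (simp add: qs_mean_def harm_Suc field_simps)

lemma qs_toll_eq_harm:
  assumes a: "a < n"
  shows "qs_toll n a = (real n + 1) - 2 * (real a + 1) * (harm (Suc n) - harm (Suc a))
                  - 2 * (real n - real a) * (harm (Suc n) - harm (n - a))"
proof -
  have "Suc (n - 1 - a) = n - a" "real (n - 1 - a) = real n - real a - 1"
    using a by (auto simp: of_nat_diff)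
  thus ?thesis unfolding qs_toll_def qs_mean_eq_harm_Suc by (simp add: algebra_simps)
qed

lemma qs_toll_upper:
  assumes a: "a < n"
  shows "qs_toll n a \<le> ((real a + 1) - (real n - real a))\<^sup>2 / (real n + 1)"
proof -
  define P where "P = real a + 1"
  define Q where "Q = real n - real a"
  define M where "M = real n + 1"
  have M0: "M > 0" and P0: "P \<ge> 0" and Q0: "Q \<ge> 0" using a by (auto simp: P_def Q_def M_def)
  have "Q / M \<le> harm (Suc n) - harm (Suc a)"
    using harm_diff_ge[of "Suc a" "Suc n"] a by (simp add: Q_def M_def add_ac)
  hence "2 * P * (Q / M) \<le> 2 * P * (harm (Suc n) - harm (Suc a))" using P0 by (intro mult_left_mono) auto
  moreover have "P / M \<le> harm (Suc n) - harm (n - a)"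
    using harm_diff_ge[of "n - a" "Suc n"] a by (simp add: P_def M_def of_nat_diff add_ac)
  hence "2 * Q * (P / M) \<le> 2 * Q * (harm (Suc n) - harm (n - a))" using Q0 by (intro mult_left_mono) auto
  moreover have "qs_toll n a = M - 2 * P * (harm (Suc n) - harm (Suc a)) - 2 * Q * (harm (Suc n) - harm (n - a))"
    using qs_toll_eq_harm[OF a] by (simp add: P_def Q_def M_def)
  moreover have "2 * P * (Q / M) + 2 * Q * (P / M) = 4 * P * Q / M" by (simp add: field_simps)
  ultimately have "qs_toll n a \<le> M - 4 * P * Q / M" by linarith
  also have "\<dots> = (P - Q)\<^sup>2 / M" using M0 by (simp add: M_def P_def Q_def field_simps power2_eq_square)
  finally show ?thesis by (simp add: P_def Q_def M_def)
qed

lemma qs_toll_lower: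
  assumes a: "a < n"
  shows "- 2 * (real a + 1) * (real n - real a) / (real n + 1) \<le> qs_toll n a"
proof -
  define P where "P = real a + 1"
  define Q where "Q = real n - real a"
  define M where "M = real n + 1"
  have M0: "M > 0" and P0: "P > 0" and Q0: "Q > 0" using a by (auto simp: P_def Q_def M_def)
  have "harm (Suc n) - harm (Suc a) \<le> (M\<^sup>2 - P\<^sup>2) / (2 * M * P)"
    using harm_diff_le[of "Suc a" "Suc n"] a by (simp add: P_def M_def add_ac)
  hence "2 * P * (harm (Suc n) - harm (Suc a)) \<le> 2 * P * ((M\<^sup>2 - P\<^sup>2) / (2 * M * P))"
    using P0 by (intro mult_left_mono) auto
  moreover have "harm (Suc n) - harm (n - a) \<le> (M\<^sup>2 - Q\<^sup>2) / (2 * M * Q)"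
    using harm_diff_le[of "n - a" "Suc n"] a by (simp add: Q_def M_def of_nat_diff add_ac)
  hence "2 * Q * (harm (Suc n) - harm (n - a)) \<le> 2 * Q * ((M\<^sup>2 - Q\<^sup>2) / (2 * M * Q))"
    using Q0 by (intro mult_left_mono) auto
  moreover have "qs_toll n a = M - 2 * P * (harm (Suc n) - harm (Suc a)) - 2 * Q * (harm (Suc n) - harm (n - a))"
    using qs_toll_eq_harm[OF a] by (simp add: P_def Q_def M_def)
  moreover have "2 * P * ((M\<^sup>2 - P\<^sup>2) / (2 * M * P)) = (M\<^sup>2 - P\<^sup>2) / M"
    "2 * Q * ((M\<^sup>2 - Q\<^sup>2) / (2 * M * Q)) = (M\<^sup>2 - Q\<^sup>2) / M"
    using P0 Q0 M0 by (simp_all add: field_simps)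
  ultimately have "M - (M\<^sup>2 - P\<^sup>2) / M - (M\<^sup>2 - Q\<^sup>2) / M \<le> qs_toll n a" by linarith
  moreover have "M - (M\<^sup>2 - P\<^sup>2) / M - (M\<^sup>2 - Q\<^sup>2) / M = - 2 * P * Q / M"
    using M0 unfolding M_def P_def Q_def by (simp add: divide_simps) (simp add: algebra_simps power2_eq_square)
  ultimately show ?thesis by (simp add: P_def Q_def M_def)
qed

lemma qs_mean_sum: "2 * (\<Sum>a<n. qs_mean a) = real n * qs_mean n - real n * (real n - 1)"
proof (induction n)
  case (Suc n)
  have "2 * (\<Sum>a<Suc n. qs_mean a) = real n * qs_mean n - real n * (real n - 1) + 2 * qs_mean n"
    using Suc by simp
  also have "\<dots> = real (Suc n) * qs_mean (Suc n) - real (Suc n) * (real (Suc n) - 1)"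
    by (simp add: qs_mean_def harm_Suc field_simps)
  finally show ?case .
qed simp

lemma qs_toll_sym: "a < n \<Longrightarrow> qs_toll n (n - 1 - a) = qs_toll n a"
  by (simp add: qs_toll_def algebra_simps)

lemma qs_toll_sum: "(\<Sum>a<n. qs_toll n a) = 0"
proof -
  have "(\<Sum>a<n. qs_mean (n - 1 - a)) = (\<Sum>a<n. qs_mean a)"
    using sum.nat_diff_reindex[of qs_mean n] by (simp add: Suc_diff_Suc)
  thus ?thesis using qs_mean_sum[of n]
    by (simp add: qs_toll_def sum.distrib sum_subtractf)
qed

interpretation qs: toll_bounds n "qs_toll n" for n
  by unfold_locales (simp_all only: qs_toll_upper qs_toll_lower qs_toll_sym qs_toll_sum)

section \<open>Bounds on the moment generating function and the tail estimate\<close>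

lemma qs_mgf_le_of_bounds:
  assumes n: "n \<ge> 1" and F: "\<And>k. k < n \<Longrightarrow> qs_mgf k t \<le> exp (F k)"
  shows "qs_mgf n t \<le> (\<Sum>a<n. exp (F a + F (n - 1 - a) + t * qs_toll n a)) / real n"
proof -
  have "qs_mgf n t = (\<Sum>a<n. qs_mgf a t * qs_mgf (n - 1 - a) t * exp (t * qs_toll n a)) / real n"
    by (rule qs_mgf_recurrence[OF n])
  also have "\<dots> \<le> (\<Sum>a<n. exp (F a) * exp (F (n - 1 - a)) * exp (t * qs_toll n a)) / real n"
    using F by (intro divide_right_mono sum_mono mult_right_mono mult_mono) (auto simp: qs_mgf_nonneg)
  finally show ?thesis by (simp add: exp_add)
qed

lemma qs_mgf_pos_le:
  assumes t: "t > 0"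
  shows "qs_mgf n t \<le> exp (mgf_exponent (t * real n))"
proof (induction n rule: less_induct)
  case (less n)
  consider "n = 0" | "n = 1" | "n \<ge> 2" by linarith
  thus ?case
  proof cases
    case 1 thus ?thesis by (simp add: qs_mgf_0 mgf_exponent_def)
  next
    case 2
    have "qs_mgf 1 t = 1"
      using qs_mgf_recurrence[of 1 t] qs_mean_1 by (simp add: qs_mgf_0 qs_toll_def qs_mean_0)
    thus ?thesis using 2 mgf_exponent_nonneg[of t] by simp
  next
    case 3
    have "qs_mgf n t \<le> (\<Sum>a<n. exp (mgf_exponent (t * real a)
        + mgf_exponent (t * real (n - 1 - a)) + t * qs_toll n a)) / real n"
      by (rule qs_mgf_le_of_bounds) (use 3 less in auto)
    also have "\<dots> \<le> real n * exp (mgf_exponent (t * real n)) / real n"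
      by (intro divide_right_mono qs.sum_exp_mgf_exponent_step[OF t 3]) auto
    finally show ?thesis using 3 by simp
  qed
qed

lemma qs_mgf_neg_le:
  assumes r: "r > 0"
  shows "qs_mgf n (- r) \<le> exp (12 * (r * real n)\<^sup>2)"
proof (induction n rule: less_induct)
  case (less n)
  show ?case
  proof (cases "n = 0")
    case True thus ?thesis by (simp add: qs_mgf_0)
  next
    case False
    have "qs_mgf n (- r) \<le> (\<Sum>a<n. exp (12 * (r * real a)\<^sup>2 + 12 * (r * real (n - 1 - a))\<^sup>2
        + (- r) * qs_toll n a)) / real n"
      by (rule qs_mgf_le_of_bounds) (use False less in auto)
    also have "\<dots> \<le> real n * exp (12 * (r * real n)\<^sup>2) / real n"
      by (intro divide_right_mono qs.sum_exp_quadratic_step[OF r]) auto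
    finally show ?thesis using False by simp
  qed
qed

lemma qs_mean_ge:
  assumes "n \<ge> 1"
  shows "real n * (2 * ln (real n) - 3) \<le> qs_mean n"
proof -
  have "(\<lambda>k. harm (Suc k) - ln (real (Suc k)) :: real) \<longlonglongrightarrow> euler_mascheroni"
    using LIMSEQ_Suc[OF euler_mascheroni_LIMSEQ] by simp
  hence "euler_mascheroni \<le> harm n - ln (real n)"
    using decseq_ge[OF decseq_harm_diff_ln, of euler_mascheroni "n - 1"] assms by simp
  hence "ln (real n) + 1/2 \<le> harm n" using euler_mascheroni_gt_19_over_33 by simp
  hence "2 * real n * (ln (real n) + 1/2) \<le> 2 * real n * harm n" by (intro mult_left_mono) auto
  moreover have "(harm n :: real) \<ge> 0" by (rule harm_nonneg)
  ultimately have "2 * real n * (ln (real n) + 1/2) \<le> 2 * real n * harm n + 2 * harm n"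
    by linarith
  thus ?thesis by (simp add: qs_mean_def algebra_simps)
qed

lemma pmf_Chernoff_ineq_ge:
  fixes p :: "'a pmf" and f :: "'a \<Rightarrow> real"
  assumes "finite (set_pmf p)" and "t > 0"
  shows "measure_pmf.prob p {x. a \<le> f x}
    \<le> exp (- t * a) * measure_pmf.expectation p (\<lambda>x. exp (t * f x))"
  using measure_pmf.Chernoff_ineq_ge[of t p UNIV f a] assms
  by (simp add: integrable_measure_pmf_finite set_integrable_def set_lebesgue_integral_def)

lemma exp_neg_mean_le:
  assumes n: "n \<ge> 1" and eps: "eps > 0" and l: "l > 0"
  shows "exp (- (l / real n) * (eps * qs_mean n)) \<le> exp (3 * eps * l) * real n powr (- 2 * eps * l)"
proof -
  have "l / real n * (real n * (2 * ln (real n) - 3)) \<le> l / real n * qs_mean n"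
    using qs_mean_ge[OF n] l by (intro mult_left_mono) auto
  hence "l * (2 * ln (real n) - 3) \<le> l / real n * qs_mean n" using n by simp
  hence "eps * (l * (2 * ln (real n) - 3)) \<le> eps * (l / real n * qs_mean n)"
    using eps by (intro mult_left_mono) auto
  hence "exp (- (l / real n) * (eps * qs_mean n)) \<le> exp (3 * eps * l + (- 2 * eps * l) * ln (real n))"
    by (simp add: algebra_simps)
  also have "\<dots> = exp (3 * eps * l) * real n powr (- 2 * eps * l)"
    using n by (simp add: powr_def flip: exp_add)
  finally show ?thesis .
qed

lemma qs_upper_tail_le:
  assumes n: "n \<ge> 1" and eps: "eps > 0" and l: "l > 0"
  shows "measure_pmf.prob (qs_pmf n) {k. eps * qs_mean n \<le> real k - qs_mean n}
    \<le> exp (max (12 * l\<^sup>2) (2 * exp l)) * (exp (3 * eps * l) * real n powr (- 2 * eps * l))"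
proof -
  define t where "t = l / real n"
  have t: "t > 0" and tn: "t * real n = l" using n l by (auto simp: t_def)
  have "qs_mgf n t \<le> exp (max (12 * l\<^sup>2) (2 * exp l))"
    using qs_mgf_pos_le[OF t, of n] mgf_exponent_le_max[of l] tn by (smt (verit) exp_le_cancel_iff)
  moreover have "measure_pmf.prob (qs_pmf n) {k. eps * qs_mean n \<le> real k - qs_mean n}
    \<le> exp (- t * (eps * qs_mean n)) * qs_mgf n t"
    unfolding qs_mgf_def by (rule pmf_Chernoff_ineq_ge[OF qs_pmf_finite t])
  ultimately show ?thesis
    using exp_neg_mean_le[OF n eps l] qs_mgf_nonneg[of n t]
    by (simp add: t_def mult.commute mult_mono order_trans)
qed

lemma qs_lower_tail_le:
  assumes n: "n \<ge> 1" and eps: "eps > 0" and l: "l > 0"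
  shows "measure_pmf.prob (qs_pmf n) {k. eps * qs_mean n \<le> qs_mean n - real k}
    \<le> exp (max (12 * l\<^sup>2) (2 * exp l)) * (exp (3 * eps * l) * real n powr (- 2 * eps * l))"
proof -
  define t where "t = l / real n"
  have t: "t > 0" and tn: "t * real n = l" using n l by (auto simp: t_def)
  have "qs_mgf n (- t) \<le> exp (max (12 * l\<^sup>2) (2 * exp l))"
    using qs_mgf_neg_le[OF t, of n] tn by (smt (verit) exp_le_cancel_iff)
  moreover have "measure_pmf.prob (qs_pmf n) {k. eps * qs_mean n \<le> qs_mean n - real k}
    \<le> exp (- t * (eps * qs_mean n)) * qs_mgf n (- t)"
    using pmf_Chernoff_ineq_ge[OF qs_pmf_finite t, of n "eps * qs_mean n" "\<lambda>k. qs_mean n - real k"]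
    by (simp add: qs_mgf_def algebra_simps)
  ultimately show ?thesis
    using exp_neg_mean_le[OF n eps l] qs_mgf_nonneg[of n "- t"]
    by (simp add: t_def mult.commute mult_mono order_trans)
qed

theorem corollary7p3:
  fixes n :: nat and eps l :: real
  assumes "n \<ge> 1" and "eps > 0" and "l > 0"
  shows "measure_pmf.prob (qs_pmf n) {k. \<bar>real k - qs_mean n\<bar> \<ge> eps * qs_mean n}
           \<le> 2 * exp (3 * eps * l + max (12 * l\<^sup>2) (2 * exp l))
               * real n powr (- 2 * eps * l)"
proof -
  let ?prob = "measure_pmf.prob (qs_pmf n)"
  let ?U = "{k. eps * qs_mean n \<le> real k - qs_mean n}"
  let ?L = "{k. eps * qs_mean n \<le> qs_mean n - real k}"
  have "?prob {k. \<bar>real k - qs_mean n\<bar> \<ge> eps * qs_mean n} \<le> ?prob (?U \<union> ?L)"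
    by (intro measure_pmf.finite_measure_mono) auto
  also have "\<dots> \<le> ?prob ?U + ?prob ?L"
    by (rule measure_Un_le) auto
  also have "\<dots> \<le> 2 * (exp (max (12 * l\<^sup>2) (2 * exp l)) * (exp (3 * eps * l) * real n powr (- 2 * eps * l)))"
    using qs_upper_tail_le[OF assms] qs_lower_tail_le[OF assms] by simp
  finally show ?thesis by (simp add: exp_add mult_ac)
qed

end
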